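(* Let $G$ be a graph of maximum degree at most $3$. Then $G$ has a matching $M$ such that the multigraph $G/M$ obtained by contracting all edges of $M$ (keeping parallel edges) is bipartite. *)

theory Defs
  imports Main
begin

definition simple_graph :: "'a set \<Rightarrow> 'a set set \<Rightarrow> bool" where
  "simple_graph V E \<longleftrightarrow> finite V \<and> (\<forall>e\<in>E. e \<subseteq> V \<and> card e = 2)"

definition degree :: "'a set set \<Rightarrow> 'a \<Rightarrow> nat" where
  "degree E v = card {e\<in>E. v \<in> e}"

definition matching :: "'a set set \<Rightarrow> 'a set set \<Rightarrow> bool" where
  "matching E M \<longleftrightarrow> M \<subseteq> E \<and> (\<forall>e1\<in>M. \<forall>e2\<in>M. e1 \<noteq> e2 \<longrightarrow> e1 \<inter> e2 = {})"

definition contract_vertex :: "'a set set \<Rightarrow> 'a \<Rightarrow> 'a set" where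
  "contract_vertex M v = (if \<exists>e\<in>M. v \<in> e then (THE e. e \<in> M \<and> v \<in> e) else {v})"

text \<open>Multigraph given by vertex set VV, edge index set EE and endpoint map ends
  (ends e is a 1-element set for a loop, a 2-element set otherwise).\<close>
definition bipartite_multigraph :: "'v set \<Rightarrow> 'e set \<Rightarrow> ('e \<Rightarrow> 'v set) \<Rightarrow> bool" where
  "bipartite_multigraph VV EE ends \<longleftrightarrow>
     (\<exists>A B. A \<inter> B = {} \<and> A \<union> B = VV \<and> (\<forall>e\<in>EE. \<exists>a\<in>A. \<exists>b\<in>B. ends e = {a, b}))"

text \<open>The multigraph G/M: contract every edge of M, keep all other edges
  (as distinct, possibly parallel, edges indexed by E - M).\<close>
definition contraction_bipartite :: "'a set \<Rightarrow> 'a set set \<Rightarrow> 'a set set \<Rightarrow> bool" where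
  "contraction_bipartite V E M \<longleftrightarrow>
     bipartite_multigraph (contract_vertex M ` V) (E - M) (\<lambda>e. contract_vertex M ` e)"

end

theory Submission
  imports Defs
begin

text \<open>Take a maximum cut \<open>A\<close>. Moving a vertex to the other side swaps its cut and uncut edges,
  so maximality leaves every vertex with at least as many cut as uncut edges; with degree at most
  three this means at most one uncut edge. Hence the uncut edges form a matching \<open>M\<close>, each edge of
  \<open>M\<close> lies on one side of the cut, and contracting \<open>M\<close> yields a multigraph in which every remaining
  edge crosses the cut, i.e. a bipartite one.\<close>

definition crossing :: "'a set \<Rightarrow> 'a set \<Rightarrow> bool" where
  "crossing A e \<longleftrightarrow> e \<inter> A \<noteq> {} \<and> e - A \<noteq> {}"

definition cut_edges :: "'a set set \<Rightarrow> 'a set \<Rightarrow> 'a set set" where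
  "cut_edges E A = {e\<in>E. crossing A e}"

lemma crossing_Compl [simp]: "crossing (- A) e \<longleftrightarrow> crossing A e"
  unfolding crossing_def by auto

lemma cut_edges_Compl [simp]: "cut_edges E (- A) = cut_edges E A"
  unfolding cut_edges_def by simp

lemma crossing_doubleton_remove:
  assumes "v \<in> A" "v \<noteq> b"
  shows "crossing (A - {v}) {v, b} \<longleftrightarrow> \<not> crossing A {v, b}"
  using assms unfolding crossing_def by auto

lemma crossing_remove_notin: "v \<notin> e \<Longrightarrow> crossing (A - {v}) e \<longleftrightarrow> crossing A e"
  unfolding crossing_def by blast

lemma card_2_elem_obtain_other:
  assumes "card e = 2" "v \<in> e"
  obtains b where "e = {v, b}" "v \<noteq> b"
  using assms by (auto simp: card_2_iff)

lemma degree_eq_card_split: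
  assumes "finite E"
  shows "degree E v = card {e\<in>E. v \<in> e \<and> P e} + card {e\<in>E. v \<in> e \<and> \<not> P e}"
proof -
  have "{e\<in>E. v \<in> e} \<inter> Collect P = {e\<in>E. v \<in> e \<and> P e}"
    "{e\<in>E. v \<in> e} - Collect P = {e\<in>E. v \<in> e \<and> \<not> P e}" by auto
  then show ?thesis
    unfolding degree_def using card_Int_Diff[of "{e\<in>E. v \<in> e}" "Collect P"] assms by simp
qed

lemma card_cut_edges_remove_less:
  assumes "finite E" and two: "\<forall>e\<in>E. card e = 2" and "v \<in> A"
    and more_uncut: "card {e\<in>E. v \<in> e \<and> crossing A e} < card {e\<in>E. v \<in> e \<and> \<not> crossing A e}"
  shows "card (cut_edges E A) < card (cut_edges E (A - {v}))"
proof -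
  define D where "D = {e\<in>E. v \<in> e}"
  have flip: "crossing (A - {v}) e \<longleftrightarrow> \<not> crossing A e" if "e \<in> D" for e
  proof -
    have "card e = 2" "v \<in> e" using that two unfolding D_def by auto
    then obtain b where "e = {v, b}" "v \<noteq> b" by (rule card_2_elem_obtain_other)
    then show ?thesis using crossing_doubleton_remove[OF \<open>v \<in> A\<close>] by simp
  qed
  have away: "cut_edges E (A - {v}) - D = cut_edges E A - D"
    unfolding cut_edges_def D_def by (auto simp: crossing_remove_notin)
  have cut_at_v: "cut_edges E A \<inter> D = {e\<in>E. v \<in> e \<and> crossing A e}"
    unfolding cut_edges_def D_def by blast
  have "cut_edges E (A - {v}) \<inter> D = {e\<in>D. crossing (A - {v}) e}"
    unfolding cut_edges_def D_def by blast
  also have "\<dots> = {e\<in>D. \<not> crossing A e}"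
    using flip by blast
  finally have uncut_at_v: "cut_edges E (A - {v}) \<inter> D = {e\<in>E. v \<in> e \<and> \<not> crossing A e}"
    unfolding D_def by blast
  have "card (cut_edges E A) = card (cut_edges E A \<inter> D) + card (cut_edges E A - D)"
    using \<open>finite E\<close> by (intro card_Int_Diff) (simp add: cut_edges_def)
  also have "\<dots> < card (cut_edges E (A - {v}) \<inter> D) + card (cut_edges E (A - {v}) - D)"
    using cut_at_v uncut_at_v away more_uncut by simp
  also have "\<dots> = card (cut_edges E (A - {v}))"
    using \<open>finite E\<close> by (intro card_Int_Diff[symmetric]) (simp add: cut_edges_def)
  finally show ?thesis .
qed

lemma max_cut_exists:
  assumes "finite E"
  shows "\<exists>A. \<forall>B. card (cut_edges E B) \<le> card (cut_edges E A)"
proof -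
  have "card (cut_edges E B) \<le> card E" for B
    using assms unfolding cut_edges_def by (intro card_mono) auto
  then have "\<forall>B. card (cut_edges E B) < Suc (card E)"
    by (simp add: le_imp_less_Suc)
  then show ?thesis
    using ex_has_greatest_nat[of "\<lambda>_. True" "{}" "\<lambda>B. card (cut_edges E B)" "Suc (card E)"]
    by simp
qed

lemma max_cut_uncut_le_cut:
  assumes "finite E" and "\<forall>e\<in>E. card e = 2"
    and max: "\<forall>B. card (cut_edges E B) \<le> card (cut_edges E A)"
  shows "card {e\<in>E. v \<in> e \<and> \<not> crossing A e} \<le> card {e\<in>E. v \<in> e \<and> crossing A e}"
proof (rule ccontr)
  assume "\<not> ?thesis"
  then have more_uncut: "card {e\<in>E. v \<in> e \<and> crossing A e} < card {e\<in>E. v \<in> e \<and> \<not> crossing A e}"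
    by simp
  show False
  proof (cases "v \<in> A")
    case True
    with assms more_uncut have "card (cut_edges E A) < card (cut_edges E (A - {v}))"
      by (intro card_cut_edges_remove_less)
    with max[rule_format, of "A - {v}"] show False by simp
  next
    case False
    with assms more_uncut have "card (cut_edges E (- A)) < card (cut_edges E (- A - {v}))"
      by (intro card_cut_edges_remove_less) simp_all
    moreover have "- A - {v} = - insert v A" by auto
    ultimately have "card (cut_edges E A) < card (cut_edges E (insert v A))" by simp
    with max[rule_format, of "insert v A"] show False by simp
  qed
qed

lemma simple_graph_finite_edges:
  assumes "simple_graph V E"
  shows "finite E"
proof (rule finite_subset)
  show "E \<subseteq> Pow V" using assms unfolding simple_graph_def by auto
  show "finite (Pow V)" using assms unfolding simple_graph_def by simp
qed

lemma max_cut_uncut_edges_matching: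
  assumes G: "simple_graph V E" and deg: "\<forall>v\<in>V. degree E v \<le> 3"
    and max: "\<forall>B. card (cut_edges E B) \<le> card (cut_edges E A)"
  shows "matching E {e\<in>E. \<not> crossing A e}"
  unfolding matching_def
proof (intro conjI ballI impI)
  have "finite E" using G by (rule simple_graph_finite_edges)
  fix e1 e2 assume e1: "e1 \<in> {e\<in>E. \<not> crossing A e}" and e2: "e2 \<in> {e\<in>E. \<not> crossing A e}"
    and "e1 \<noteq> e2"
  show "e1 \<inter> e2 = {}"
  proof (rule ccontr)
    assume "e1 \<inter> e2 \<noteq> {}"
    then obtain v where "v \<in> e1" "v \<in> e2" by auto
    have "v \<in> V" using G e1 \<open>v \<in> e1\<close> unfolding simple_graph_def by auto
    let ?uncut = "{e\<in>E. v \<in> e \<and> \<not> crossing A e}" and ?cut = "{e\<in>E. v \<in> e \<and> crossing A e}"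
    have "card {e1, e2} \<le> card ?uncut"
      using \<open>finite E\<close> e1 e2 \<open>v \<in> e1\<close> \<open>v \<in> e2\<close> by (intro card_mono) auto
    then have "2 \<le> card ?uncut" using \<open>e1 \<noteq> e2\<close> by simp
    moreover have "card ?uncut \<le> card ?cut"
      using \<open>finite E\<close> G max unfolding simple_graph_def by (intro max_cut_uncut_le_cut) auto
    moreover have "card ?cut + card ?uncut \<le> 3"
      using deg \<open>v \<in> V\<close> degree_eq_card_split[OF \<open>finite E\<close>, of v "crossing A"] by auto
    ultimately show False by linarith
  qed
qed auto

lemma contract_vertex_matched:
  assumes "matching E M" "e \<in> M" "v \<in> e"
  shows "contract_vertex M v = e"
proof -
  have "(THE e. e \<in> M \<and> v \<in> e) = e"
    using assms unfolding matching_def by (intro the_equality) blast+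
  then show ?thesis using assms unfolding contract_vertex_def by auto
qed

lemma mem_contract_vertex:
  assumes "matching E M"
  shows "v \<in> contract_vertex M v"
proof (cases "\<exists>e\<in>M. v \<in> e")
  case True
  then show ?thesis using contract_vertex_matched[OF assms] by blast
next
  case False
  then show ?thesis unfolding contract_vertex_def by simp
qed

lemma contract_vertex_same_side:
  assumes "matching E M" "\<forall>e\<in>M. \<not> crossing A e" "v \<in> contract_vertex M u"
  shows "v \<in> A \<longleftrightarrow> u \<in> A"
proof (cases "\<exists>e\<in>M. u \<in> e")
  case True
  then obtain e where "e \<in> M" "u \<in> e" by blast
  with assms have "v \<in> e" "\<not> crossing A e" using contract_vertex_matched by metis+
  with \<open>u \<in> e\<close> show ?thesis unfolding crossing_def by blast
next
  case False
  with assms show ?thesis unfolding contract_vertex_def by simp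
qed

lemma contraction_bipartite_if_cut:
  assumes G: "simple_graph V E" and M: "matching E M"
    and inside: "\<forall>e\<in>M. \<not> crossing A e" and across: "\<forall>e\<in>E - M. crossing A e"
  shows "contraction_bipartite V E M"
  unfolding contraction_bipartite_def bipartite_multigraph_def
proof (intro exI conjI ballI)
  let ?c = "contract_vertex M"
  show "?c ` (V \<inter> A) \<inter> ?c ` (V - A) = {}"
  proof (rule equals0I)
    fix X assume "X \<in> ?c ` (V \<inter> A) \<inter> ?c ` (V - A)"
    then obtain a b where "a \<in> A" "b \<notin> A" "?c a = ?c b" by blast
    moreover have "a \<in> ?c a" using M by (rule mem_contract_vertex)
    ultimately show False using contract_vertex_same_side[OF M inside, of a b] by simp
  qed
  show "?c ` (V \<inter> A) \<union> ?c ` (V - A) = ?c ` V" by blast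
  fix e assume e: "e \<in> E - M"
  obtain x y where "e = {x, y}"
    using G e unfolding simple_graph_def by (meson DiffD1 card_2_iff)
  moreover have "crossing A e" using across e by blast
  ultimately obtain a b where "e = {a, b}" "a \<in> A" "b \<notin> A"
    unfolding crossing_def by blast
  moreover have "a \<in> V" "b \<in> V" using G e \<open>e = {a, b}\<close> unfolding simple_graph_def by auto
  ultimately have "?c a \<in> ?c ` (V \<inter> A)" "?c b \<in> ?c ` (V - A)" "?c ` e = {?c a, ?c b}" by auto
  then show "\<exists>x\<in>?c ` (V \<inter> A). \<exists>y\<in>?c ` (V - A). ?c ` e = {x, y}" by blast
qed

theorem mainTheorem6:
  fixes V :: "'a set" and E :: "'a set set"
  assumes "simple_graph V E"
    and "\<forall>v\<in>V. degree E v \<le> 3"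
  shows "\<exists>M. matching E M \<and> contraction_bipartite V E M"
proof -
  obtain A where max: "\<forall>B. card (cut_edges E B) \<le> card (cut_edges E A)"
    using max_cut_exists simple_graph_finite_edges assms(1) by blast
  let ?M = "{e\<in>E. \<not> crossing A e}"
  have "matching E ?M"
    using assms max by (rule max_cut_uncut_edges_matching)
  moreover have "contraction_bipartite V E ?M"
    using assms(1) \<open>matching E ?M\<close> by (rule contraction_bipartite_if_cut) auto
  ultimately show ?thesis by blast
qed

end
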